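(* Fix $p\in(0,1)$ and $q=1-p$. Let $\nu_n$ be the stationary law of the careless count chain on $\{0,\dots,n\}$. Then $\nu_n(n)\sim\frac{1}{(q;q)_\infty}\frac{n!}{n^n}q^{n(n+1)/2}$ as $n\to\infty$. Consequently, $\mu_n:=\mathbb P_{\nu_n}(K_0<n,K_1=n)=\nu_n(n)(1-q^n)\sim\frac{1}{(q;q)_\infty}\frac{n!}{n^n}q^{n(n+1)/2}$.
   Context: The careless count chain $(K_t)$ on $\{0,1,\dots,n\}$ is the Markov chain with transitions: given $K_t=k$, with probability $k/n$ one has $K_{t+1}\sim\mathrm{Bin}(k,q)$, and with probability $(n-k)/n$ one has $K_{t+1}\sim\mathrm{Bin}(k+1,q)$. (It is the number of held coupons in the careless collector where each round one uniformly drawn type is added and then each held coupon is independently lost with probability $p$.) It is irreducible and aperiodic with unique stationary law $\nu_n$. $(q;q)_\infty:=\prod_{r=1}^\infty(1-q^r)$. *)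

theory Defs
  imports "HOL-Analysis.Analysis" "HOL-Library.Landau_Symbols"
begin

definition binom_pmf :: "nat \<Rightarrow> real \<Rightarrow> nat \<Rightarrow> real" where
  "binom_pmf m q j = real (m choose j) * q ^ j * (1 - q) ^ (m - j)"

text \<open>Transition probability of the careless count chain on {0..n} with loss
  probability p (retention probability q = 1 - p), from state k to state j.\<close>
definition careless_P :: "nat \<Rightarrow> real \<Rightarrow> nat \<Rightarrow> nat \<Rightarrow> real" where
  "careless_P n p k j =
     real k / real n * binom_pmf k (1 - p) j
     + real (n - k) / real n * binom_pmf (k + 1) (1 - p) j"

definition careless_stationary :: "nat \<Rightarrow> real \<Rightarrow> (nat \<Rightarrow> real) \<Rightarrow> bool" where
  "careless_stationary n p \<nu> \<longleftrightarrow>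
     (\<forall>j. n < j \<longrightarrow> \<nu> j = 0) \<and> (\<forall>j\<le>n. 0 \<le> \<nu> j) \<and> (\<Sum>j\<le>n. \<nu> j) = 1 \<and>
     (\<forall>j\<le>n. \<nu> j = (\<Sum>k\<le>n. \<nu> k * careless_P n p k j))"

definition careless_nu :: "nat \<Rightarrow> real \<Rightarrow> nat \<Rightarrow> real" where
  "careless_nu n p = (THE \<nu>. careless_stationary n p \<nu>)"

definition careless_mu :: "nat \<Rightarrow> real \<Rightarrow> real" where
  "careless_mu n p = (\<Sum>k<n. careless_nu n p k * careless_P n p k n)"

definition qpoch_inf :: "real \<Rightarrow> real" where
  "qpoch_inf q = (\<Prod>r. 1 - q ^ Suc r)"

end

theory Submission
  imports Defs
begin

text \<open>
  Write \<open>m i v = (\<Sum>k\<le>n. v k * (k choose i))\<close> for the binomial moments of a vector on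
  \<open>{0..n}\<close>. Since \<open>Bin(k, q)\<close> has \<open>i\<close>-th binomial moment \<open>(k choose i) * q ^ i\<close>, one step
  of the chain acts triangularly on them:
  \<open>m (l+1) (vP) = q ^ (l+1) * ((1 - (l+1)/n) * m (l+1) v + (n-l)/n * m l v)\<close>.
  So the moments of a stationary law are forced to be
  \<open>m i = (\<Prod>l=1..i. q ^ l * (n-l+1)/n / (1 - q ^ l * (1 - l/n)))\<close>; as the moments determine
  the vector (again triangularly), the stationary law is unique and
  \<open>\<nu>\<^sub>n(n) = m n = n!/n^n * q ^ (n(n+1)/2) / (\<Prod>l=1..n. 1 - q ^ l * (1 - l/n))\<close>.
  The last product lies between the partial product of \<open>(q;q)\<^sub>\<infinity>\<close> and that partial product
  times \<open>exp (1 / (n p ^ 3))\<close>, since \<open>\<Sum>l. l * q ^ l\<close> converges.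
  For existence, back-substitution gives a signed solution of the moment equations, which is hence
  fixed by the chain; the absolute value of a fixed vector of a stochastic matrix is again fixed,
  and normalising it yields \<open>\<nu>\<^sub>n\<close>.
\<close>

section \<open>Binomial moments under one step of the chain\<close>

lemma binom_pmf_binomial_moment:
  fixes x :: real
  assumes "m \<le> N"
  shows "(\<Sum>j\<le>N. binom_pmf m x j * real (j choose i)) = real (m choose i) * x ^ i"
proof (cases "i \<le> m")
  case False
  then show ?thesis
    by (auto simp: binom_pmf_def binomial_eq_0 not_le intro!: sum.neutral)
next
  case True
  have "(\<Sum>j\<le>N. binom_pmf m x j * real (j choose i))
      = (\<Sum>j\<in>{i..m}. binom_pmf m x j * real (j choose i))"
    using assms by (intro sum.mono_neutral_right) (auto simp: binom_pmf_def binomial_eq_0)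
  also have "\<dots> = (\<Sum>t\<le>m - i. real (m choose i) * x ^ i
                     * (real ((m - i) choose t) * x ^ t * (1 - x) ^ (m - i - t)))"
  proof (rule sum.reindex_bij_witness[where i = "\<lambda>t. t + i" and j = "\<lambda>j. j - i"])
    fix j assume j: "j \<in> {i..m}"
    have "real (m choose j) * real (j choose i) = real (m choose i) * real ((m - i) choose (j - i))"
      using choose_mult[of i j m] j by (simp flip: of_nat_mult)
    moreover have "x ^ j = x ^ i * x ^ (j - i)" "m - i - (j - i) = m - j"
      using j by (auto simp flip: power_add)
    ultimately show "real (m choose i) * x ^ i * (real ((m - i) choose (j - i)) * x ^ (j - i)
        * (1 - x) ^ (m - i - (j - i))) = binom_pmf m x j * real (j choose i)"
      by (simp add: binom_pmf_def algebra_simps)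
  qed (use True in auto)
  also have "\<dots> = real (m choose i) * x ^ i * (x + (1 - x)) ^ (m - i)"
    unfolding binomial_ring by (simp only: sum_distrib_left)
  finally show ?thesis by simp
qed

lemma careless_P_nonneg:
  assumes "0 \<le> p" "p \<le> 1"
  shows "0 \<le> careless_P n p k j"
  using assms by (simp add: careless_P_def binom_pmf_def)

lemma careless_P_binomial_moment:
  assumes "k \<le> n"
  shows "(\<Sum>j\<le>n. careless_P n p k j * real (j choose i)) = (1 - p) ^ i
           * (real k / real n * real (k choose i) + real (n - k) / real n * real (Suc k choose i))"
proof (cases "k = n")
  case True
  then show ?thesis
    by (simp add: careless_P_def sum_distrib_left mult.assoc binom_pmf_binomial_moment)
next
  case False
  with assms have "Suc k \<le> n" by simp
  have "(\<Sum>j\<le>n. careless_P n p k j * real (j choose i))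
      = real k / real n * (\<Sum>j\<le>n. binom_pmf k (1 - p) j * real (j choose i))
        + real (n - k) / real n * (\<Sum>j\<le>n. binom_pmf (Suc k) (1 - p) j * real (j choose i))"
    by (simp add: careless_P_def sum_distrib_left sum.distrib algebra_simps)
  also have "\<dots> = real k / real n * (real (k choose i) * (1 - p) ^ i)
                   + real (n - k) / real n * (real (Suc k choose i) * (1 - p) ^ i)"
    using assms \<open>Suc k \<le> n\<close> by (simp only: binom_pmf_binomial_moment)
  finally show ?thesis by (simp add: algebra_simps)
qed

lemma careless_P_row_sum:
  assumes "k \<le> n" "0 < n"
  shows "(\<Sum>j\<le>n. careless_P n p k j) = 1"
  using careless_P_binomial_moment[OF assms(1), of p 0] assms
  by (simp add: of_nat_diff field_simps)

lemma binomial_absorb_comp_Suc: "(k - l) * (k choose l) = Suc l * (k choose Suc l)"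
  by (metis binomial_absorb_comp binomial_absorption)

lemma careless_P_binomial_moment_Suc:
  assumes "k \<le> n" "0 < n"
  shows "(\<Sum>j\<le>n. careless_P n p k j * real (j choose Suc l)) = (1 - p) ^ Suc l
           * ((1 - real (Suc l) / real n) * real (k choose Suc l)
              + (real n - real l) / real n * real (k choose l))"
proof -
  have "(real k - real l) * real (k choose l) = real (Suc l) * real (k choose Suc l)"
  proof (cases "l \<le> k")
    case True
    then show ?thesis using binomial_absorb_comp_Suc[of k l] by (metis of_nat_diff of_nat_mult)
  qed (simp add: binomial_eq_0)
  then show ?thesis
    using assms by (simp add: careless_P_binomial_moment of_nat_diff field_simps)
qed

definition careless_step :: "nat \<Rightarrow> real \<Rightarrow> (nat \<Rightarrow> real) \<Rightarrow> nat \<Rightarrow> real" where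
  "careless_step n p v j = (\<Sum>k\<le>n. v k * careless_P n p k j)"

definition binomial_moment :: "nat \<Rightarrow> (nat \<Rightarrow> real) \<Rightarrow> nat \<Rightarrow> real" where
  "binomial_moment n v i = (\<Sum>k\<le>n. v k * real (k choose i))"

lemma binomial_moment_cong:
  "(\<And>j. j \<le> n \<Longrightarrow> v j = w j) \<Longrightarrow> binomial_moment n v i = binomial_moment n w i"
  unfolding binomial_moment_def by (intro sum.cong) auto

lemma binomial_moment_diff:
  "binomial_moment n (\<lambda>k. v k - w k) i = binomial_moment n v i - binomial_moment n w i"
  unfolding binomial_moment_def by (simp add: sum_subtractf left_diff_distrib)

lemma binomial_moment_0: "binomial_moment n v 0 = (\<Sum>k\<le>n. v k)"
  by (simp add: binomial_moment_def)

lemma binomial_moment_eq_add_sum_above: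
  assumes "j \<le> n"
  shows "binomial_moment n v j = v j + (\<Sum>k=Suc j..n. v k * real (k choose j))"
proof -
  have "binomial_moment n v j = (\<Sum>k=j..n. v k * real (k choose j))"
    unfolding binomial_moment_def by (intro sum.mono_neutral_right) (auto simp: binomial_eq_0)
  then show ?thesis
    using assms by (simp add: sum.atLeast_Suc_atMost)
qed

lemma binomial_moment_top: "binomial_moment n v n = v n"
  using binomial_moment_eq_add_sum_above[of n n v] by simp

lemma binomial_moments_eq_0_imp_eq_0:
  assumes "\<And>i. i \<le> n \<Longrightarrow> binomial_moment n v i = 0" "j \<le> n"
  shows "v j = 0"
  using assms(2)
proof (induction "n - j" arbitrary: j rule: less_induct)
  case less
  have "v k = 0" if "k \<in> {Suc j..n}" for k
    using that by (intro less.hyps) auto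
  then show ?case
    using binomial_moment_eq_add_sum_above[OF less.prems, of v] assms(1)[OF less.prems] by simp
qed

function binomial_moment_inverse :: "nat \<Rightarrow> (nat \<Rightarrow> real) \<Rightarrow> nat \<Rightarrow> real" where
  "binomial_moment_inverse n M j = (if n < j then 0
     else M j - (\<Sum>k=Suc j..n. binomial_moment_inverse n M k * real (k choose j)))"
  by pat_completeness auto
termination by (relation "Wellfounded.measure (\<lambda>(n, M, j). n - j)") auto

declare binomial_moment_inverse.simps [simp del]

lemma binomial_moment_binomial_moment_inverse:
  assumes "j \<le> n"
  shows "binomial_moment n (binomial_moment_inverse n M) j = M j"
  using binomial_moment_eq_add_sum_above[OF assms] binomial_moment_inverse.simps[of n M j] assms
  by simp

lemma binomial_moment_careless_step:
  "binomial_moment n (careless_step n p v) i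
     = (\<Sum>k\<le>n. v k * (\<Sum>j\<le>n. careless_P n p k j * real (j choose i)))"
  unfolding binomial_moment_def careless_step_def sum_distrib_left sum_distrib_right
  by (subst sum.swap) (simp add: mult.assoc)

lemma binomial_moment_careless_step_0:
  assumes "0 < n"
  shows "binomial_moment n (careless_step n p v) 0 = binomial_moment n v 0"
  unfolding binomial_moment_careless_step using careless_P_row_sum[OF _ assms]
  by (simp add: binomial_moment_0)

lemma binomial_moment_careless_step_Suc:
  assumes "0 < n"
  shows "binomial_moment n (careless_step n p v) (Suc l) = (1 - p) ^ Suc l
           * ((1 - real (Suc l) / real n) * binomial_moment n v (Suc l)
              + (real n - real l) / real n * binomial_moment n v l)"
proof -
  let ?a = "(1 - p) ^ Suc l" and ?b = "1 - real (Suc l) / real n"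
    and ?c = "(real n - real l) / real n"
  have "binomial_moment n (careless_step n p v) (Suc l)
      = (\<Sum>k\<le>n. v k * (?a * (?b * real (k choose Suc l) + ?c * real (k choose l))))"
    unfolding binomial_moment_careless_step
    by (intro sum.cong refl) (simp add: careless_P_binomial_moment_Suc assms)
  also have "\<dots> = ?a * (?b * binomial_moment n v (Suc l) + ?c * binomial_moment n v l)"
    unfolding binomial_moment_def by (simp add: sum.distrib sum_distrib_left ac_simps distrib_left)
  finally show ?thesis .
qed

section \<open>The stationary law\<close>

lemma careless_stationary_iff_step:
  "careless_stationary n p v \<longleftrightarrow>
     (\<forall>j>n. v j = 0) \<and> (\<forall>j\<le>n. 0 \<le> v j) \<and> (\<Sum>j\<le>n. v j) = 1 \<and>
     (\<forall>j\<le>n. careless_step n p v j = v j)"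
  by (auto simp: careless_stationary_def careless_step_def)

definition careless_stationary_moment :: "nat \<Rightarrow> real \<Rightarrow> nat \<Rightarrow> real" where
  "careless_stationary_moment n p i =
     (\<Prod>l=1..i. (1 - p) ^ l * ((real n - real l + 1) / real n)
                / (1 - (1 - p) ^ l * (1 - real l / real n)))"

lemma one_minus_power_mult_pos:
  fixes x t :: real
  assumes "0 \<le> x" "x < 1" "0 < l" "t \<le> 1"
  shows "0 < 1 - x ^ l * t"
proof -
  have "x ^ l * t \<le> x ^ l" using assms by (simp add: mult_left_le)
  moreover have "x ^ l < 1" using assms by (simp add: power_less_one_iff)
  ultimately show ?thesis by linarith
qed

lemma careless_stationary_moment_Suc_iff:
  assumes "0 < p" "p < 1"
  shows "X = (1 - p) ^ Suc l * ((1 - real (Suc l) / real n) * X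
               + (real n - real l) / real n * careless_stationary_moment n p l)
         \<longleftrightarrow> X = careless_stationary_moment n p (Suc l)"
proof -
  define a where "a = (1 - p) ^ Suc l"
  define b where "b = 1 - real (Suc l) / real n"
  define c where "c = (real n - real l) / real n"
  define Y where "Y = careless_stationary_moment n p l"
  have "0 < 1 - a * b"
    unfolding a_def b_def using assms by (intro one_minus_power_mult_pos) auto
  have "X = a * (b * X + c * Y) \<longleftrightarrow> X * (1 - a * b) = a * c * Y"
    by (auto simp: algebra_simps)
  also have "\<dots> \<longleftrightarrow> X = a * c * Y / (1 - a * b)"
    using \<open>0 < 1 - a * b\<close> by (simp add: eq_divide_eq)
  also have "a * c * Y / (1 - a * b) = careless_stationary_moment n p (Suc l)"
    unfolding careless_stationary_moment_def a_def b_def c_def Y_def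
    by (simp add: prod.cl_ivl_Suc)
  finally show ?thesis unfolding a_def b_def c_def Y_def .
qed

lemma careless_fixed_binomial_moment:
  assumes "0 < p" "p < 1" "0 < n"
    and fixed: "\<And>j. j \<le> n \<Longrightarrow> careless_step n p v j = v j"
    and total: "(\<Sum>j\<le>n. v j) = 1"
  shows "binomial_moment n v i = careless_stationary_moment n p i"
proof (induction i)
  case 0
  then show ?case
    using total by (simp add: binomial_moment_0 careless_stationary_moment_def)
next
  case (Suc l)
  have "binomial_moment n v (Suc l) = binomial_moment n (careless_step n p v) (Suc l)"
    using fixed by (intro binomial_moment_cong) simp
  then show ?case
    using binomial_moment_careless_step_Suc[OF \<open>0 < n\<close>, of p v l] Suc.IH
      careless_stationary_moment_Suc_iff[OF assms(1,2)] by simp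
qed

lemma careless_stationary_unique:
  assumes "0 < p" "p < 1" "0 < n" "careless_stationary n p v" "careless_stationary n p w"
  shows "v = w"
proof
  fix j
  show "v j = w j"
  proof (cases "j \<le> n")
    case True
    have "binomial_moment n (\<lambda>k. v k - w k) i = 0" for i
      using careless_fixed_binomial_moment[OF assms(1-3), of v i]
        careless_fixed_binomial_moment[OF assms(1-3), of w i] assms(4,5)
      by (simp add: binomial_moment_diff careless_stationary_iff_step)
    with True show ?thesis
      using binomial_moments_eq_0_imp_eq_0[of n "\<lambda>k. v k - w k" j] by simp
  next
    case False
    with assms(4,5) show ?thesis by (simp add: careless_stationary_def)
  qed
qed

lemma stochastic_fixed_vector_abs:
  fixes P :: "'a \<Rightarrow> 'a \<Rightarrow> real"
  assumes "finite S"
    and nonneg: "\<And>k j. k \<in> S \<Longrightarrow> j \<in> S \<Longrightarrow> 0 \<le> P k j"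
    and rows: "\<And>k. k \<in> S \<Longrightarrow> (\<Sum>j\<in>S. P k j) = 1"
    and fixed: "\<And>j. j \<in> S \<Longrightarrow> (\<Sum>k\<in>S. v k * P k j) = v j"
    and "j \<in> S"
  shows "(\<Sum>k\<in>S. \<bar>v k\<bar> * P k j) = \<bar>v j\<bar>"
proof -
  define d where "d j = (\<Sum>k\<in>S. \<bar>v k\<bar> * P k j) - \<bar>v j\<bar>" for j
  have "\<bar>v j\<bar> \<le> (\<Sum>k\<in>S. \<bar>v k\<bar> * P k j)" if "j \<in> S" for j
  proof -
    have "\<bar>v j\<bar> = \<bar>\<Sum>k\<in>S. v k * P k j\<bar>" using fixed that by simp
    also have "\<dots> \<le> (\<Sum>k\<in>S. \<bar>v k * P k j\<bar>)" by (rule sum_abs)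
    finally show ?thesis using nonneg that by (simp add: abs_mult)
  qed
  then have d_nonneg: "\<forall>j\<in>S. 0 \<le> d j" by (simp add: d_def)
  have "(\<Sum>j\<in>S. \<Sum>k\<in>S. \<bar>v k\<bar> * P k j) = (\<Sum>k\<in>S. \<bar>v k\<bar>)"
    using rows by (subst sum.swap) (simp flip: sum_distrib_left)
  then have "(\<Sum>j\<in>S. d j) = 0" by (simp add: d_def sum_subtractf)
  with d_nonneg have "d j = 0"
    using sum_nonneg_eq_0_iff[OF \<open>finite S\<close>] \<open>j \<in> S\<close> by blast
  then show ?thesis by (simp add: d_def)
qed

lemma careless_fixed_vector_exists:
  assumes "0 < p" "p < 1" "0 < n"
  obtains v where "\<And>j. j \<le> n \<Longrightarrow> careless_step n p v j = v j" "(\<Sum>j\<le>n. v j) = 1"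
proof
  define M where "M = careless_stationary_moment n p"
  define v where "v = binomial_moment_inverse n M"
  have moment_v: "binomial_moment n v i = M i" if "i \<le> n" for i
    unfolding v_def using that by (rule binomial_moment_binomial_moment_inverse)
  have "binomial_moment n (\<lambda>j. careless_step n p v j - v j) i = 0" if "i \<le> n" for i
  proof (cases i)
    case 0
    then show ?thesis by (simp add: binomial_moment_diff binomial_moment_careless_step_0 assms)
  next
    case (Suc l)
    then have "binomial_moment n (careless_step n p v) i = (1 - p) ^ Suc l
        * ((1 - real (Suc l) / real n) * M (Suc l) + (real n - real l) / real n * M l)"
      using moment_v[of l] moment_v[OF that] that
      by (simp add: binomial_moment_careless_step_Suc assms)
    also have "\<dots> = M i"
      unfolding M_def \<open>i = Suc l\<close>
      by (rule careless_stationary_moment_Suc_iff[OF assms(1,2), THEN iffD2, OF refl, symmetric])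
    finally have "binomial_moment n (careless_step n p v) i = M i" .
    then show ?thesis using moment_v[OF that] by (simp add: binomial_moment_diff)
  qed
  from binomial_moments_eq_0_imp_eq_0[OF this]
  show "careless_step n p v j = v j" if "j \<le> n" for j
    using that by simp
  show "(\<Sum>j\<le>n. v j) = 1"
    using moment_v[of 0] by (simp add: binomial_moment_0 M_def careless_stationary_moment_def)
qed

lemma careless_stationary_exists:
  assumes "0 < p" "p < 1" "0 < n"
  shows "\<exists>\<nu>. careless_stationary n p \<nu>"
proof -
  obtain v where fixed: "\<And>j. j \<le> n \<Longrightarrow> careless_step n p v j = v j"
    and total: "(\<Sum>j\<le>n. v j) = 1"
    using careless_fixed_vector_exists[OF assms] by blast
  have abs_fixed: "careless_step n p (\<lambda>k. \<bar>v k\<bar>) j = \<bar>v j\<bar>" if "j \<le> n" for j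
    unfolding careless_step_def
    using that fixed careless_P_nonneg[of p n] careless_P_row_sum[OF _ \<open>0 < n\<close>] assms
    by (intro stochastic_fixed_vector_abs) (auto simp: careless_step_def)
  define S where "S = (\<Sum>k\<le>n. \<bar>v k\<bar>)"
  have "1 \<le> S" unfolding S_def using sum_abs[of v "{..n}"] total by simp
  define \<nu> where "\<nu> j = (if j \<le> n then \<bar>v j\<bar> / S else 0)" for j
  have "careless_step n p \<nu> j = \<nu> j" if "j \<le> n" for j
    using abs_fixed[OF that] that
    by (simp add: \<nu>_def careless_step_def sum_divide_distrib [symmetric])
  moreover have "(\<Sum>j\<le>n. \<nu> j) = 1"
    using \<open>1 \<le> S\<close> by (simp add: \<nu>_def S_def sum_divide_distrib [symmetric])
  ultimately have "careless_stationary n p \<nu>"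
    using \<open>1 \<le> S\<close> by (simp add: careless_stationary_iff_step \<nu>_def)
  then show ?thesis by blast
qed

lemma careless_nu_stationary:
  assumes "0 < p" "p < 1" "0 < n"
  shows "careless_stationary n p (careless_nu n p)"
  unfolding careless_nu_def
  using careless_stationary_exists[OF assms] careless_stationary_unique[OF assms]
  by (metis theI)

lemma careless_nu_top:
  assumes "0 < p" "p < 1" "0 < n"
  shows "careless_nu n p n = careless_stationary_moment n p n"
  using careless_fixed_binomial_moment[OF assms, of "careless_nu n p" n]
    careless_nu_stationary[OF assms]
  by (simp add: binomial_moment_top careless_stationary_iff_step)

lemma careless_mu_eq:
  assumes "0 < p" "p < 1" "0 < n"
  shows "careless_mu n p = careless_nu n p n * (1 - (1 - p) ^ n)"
proof -
  have "careless_nu n p n = (\<Sum>k\<le>n. careless_nu n p k * careless_P n p k n)"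
    using careless_nu_stationary[OF assms] by (simp add: careless_stationary_def)
  also have "\<dots> = careless_mu n p + careless_nu n p n * (1 - p) ^ n"
    using assms by (simp add: careless_mu_def careless_P_def binom_pmf_def lessThan_Suc_atMost [symmetric])
  finally show ?thesis by (simp add: algebra_simps)
qed

section \<open>Asymptotics of the top atom\<close>

lemma prod_reverse_eq_fact: "(\<Prod>l=1..n. real n - real l + 1) = fact n"
proof -
  have "(\<Prod>l=1..n. real n - real l + 1) = (\<Prod>l=1..n. real l)"
    by (rule prod.reindex_bij_witness[where i = "\<lambda>l. n + 1 - l" and j = "\<lambda>l. n + 1 - l"])
      (auto simp: of_nat_diff)
  then show ?thesis by (simp add: fact_prod)
qed

lemma careless_stationary_moment_top:
  "careless_stationary_moment n p n = fact n / real n ^ n * (1 - p) ^ (n * (n + 1) div 2)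
     / (\<Prod>l=1..n. 1 - (1 - p) ^ l * (1 - real l / real n))"
proof -
  have power: "(\<Prod>l=1..n. (1 - p) ^ l) = (1 - p) ^ (n * (n + 1) div 2)"
    using gauss_sum_from_Suc_0[of n, where 'a = nat] by (simp add: power_sum [symmetric])
  show ?thesis
    unfolding careless_stationary_moment_def prod_dividef prod.distrib power prod_reverse_eq_fact
    by simp
qed

lemma convergent_prod_one_minus_power:
  fixes x :: real
  assumes "\<bar>x\<bar> < 1"
  shows "convergent_prod (\<lambda>r. 1 - x ^ Suc r)"
proof -
  have "summable (\<lambda>r. \<bar>x\<bar> * \<bar>x\<bar> ^ r)"
    using assms by (intro summable_mult summable_geometric) simp
  then have "summable (\<lambda>r. \<bar>x * x ^ r\<bar>)"
    by (simp add: abs_mult power_abs)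
  then show ?thesis
    by (intro abs_convergent_prod_imp_convergent_prod summable_imp_abs_convergent_prod)
      simp
qed

lemma qpoch_inf_nonzero:
  fixes x :: real
  assumes "\<bar>x\<bar> < 1"
  shows "qpoch_inf x \<noteq> 0"
proof -
  have small: "\<bar>x ^ Suc r\<bar> < 1" for r
    unfolding power_abs using assms by (simp only: power_less_one_iff abs_ge_zero) simp
  have "1 - x ^ Suc r \<noteq> 0" for r
    using small[of r] by (auto simp del: power_Suc)
  then show ?thesis
    unfolding qpoch_inf_def
    using prodinf_nonzero[OF convergent_prod_one_minus_power[OF assms]] by blast
qed

lemma LIMSEQ_qpoch_inf:
  fixes x :: real
  assumes "\<bar>x\<bar> < 1"
  shows "(\<lambda>n. \<Prod>l=1..n. 1 - x ^ l) \<longlonglongrightarrow> qpoch_inf x"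
proof -
  have "(\<lambda>n. \<Prod>r\<le>n. 1 - x ^ Suc r) \<longlonglongrightarrow> qpoch_inf x"
    unfolding qpoch_inf_def by (rule convergent_prod_LIMSEQ[OF convergent_prod_one_minus_power[OF assms]])
  moreover have "(\<lambda>n. \<Prod>r\<le>n. 1 - x ^ Suc r) = (\<lambda>n. \<Prod>l=1..Suc n. 1 - x ^ l)"
    by (simp only: One_nat_def prod.atLeast1_atMost_eq lessThan_Suc_atMost)
  ultimately have "(\<lambda>n. \<Prod>l=1..Suc n. 1 - x ^ l) \<longlonglongrightarrow> qpoch_inf x"
    by (simp only:)
  then show ?thesis
    by (rule LIMSEQ_imp_Suc)
qed

lemma sum_mult_power_le:
  fixes x :: real
  assumes "0 \<le> x" "x < 1"
  shows "(\<Sum>l=1..n. real l * x ^ l) \<le> 1 / (1 - x) ^ 2"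
proof -
  have "(\<Sum>l=1..n. real l * x ^ l) \<le> (\<Sum>l=1..n. real l * x ^ (l - 1))"
    using assms by (intro sum_mono mult_left_mono power_decreasing) auto
  also have "\<dots> = (\<Sum>m<n. real (Suc m) * x ^ m)"
    by (simp add: sum.atLeast1_atMost_eq)
  also have "\<dots> \<le> (\<Sum>m. real (Suc m) * x ^ m)"
    using geometric_deriv_sums[of x] assms by (intro sum_le_suminf) (auto simp: sums_iff)
  also have "\<dots> = 1 / (1 - x) ^ 2"
    using geometric_deriv_sums[of x] assms by (simp add: sums_iff)
  finally show ?thesis .
qed

lemma prod_one_minus_power_le_perturbed:
  fixes x :: real
  assumes "0 \<le> x" "x < 1"
  shows "(\<Prod>l=1..n. 1 - x ^ l) \<le> (\<Prod>l=1..n. 1 - x ^ l * (1 - real l / real n))"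
proof (rule prod_mono)
  fix l assume "l \<in> {1..n}"
  have "x ^ l * (1 - real l / real n) \<le> x ^ l"
    using assms by (intro mult_left_le) auto
  moreover have "x ^ l \<le> 1" using assms by (simp add: power_le_one)
  ultimately show "0 \<le> 1 - x ^ l \<and> 1 - x ^ l \<le> 1 - x ^ l * (1 - real l / real n)"
    by simp
qed

lemma one_minus_power_perturbed_le:
  fixes x :: real
  assumes "0 \<le> x" "x < 1" "0 < l" "0 < n"
  shows "1 - x ^ l * (1 - real l / real n) \<le> (1 - x ^ l) * (1 + real l * x ^ l / (real n * (1 - x)))"
proof -
  have "1 \<le> (1 - x ^ l) / (1 - x)"
    using power_decreasing[of 1 l x] assms by simp
  moreover have "0 \<le> real l * x ^ l / real n"
    using assms by simp
  ultimately have "real l * x ^ l / real n \<le> real l * x ^ l / real n * ((1 - x ^ l) / (1 - x))"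
    by (metis mult_left_mono mult.right_neutral)
  also have "\<dots> = (1 - x ^ l) * (real l * x ^ l / (real n * (1 - x)))"
    using assms by (simp add: field_simps)
  finally have shift: "real l * x ^ l / real n \<le> (1 - x ^ l) * (real l * x ^ l / (real n * (1 - x)))" .
  have "1 - x ^ l * (1 - real l / real n) = (1 - x ^ l) + real l * x ^ l / real n"
    by (simp add: right_diff_distrib)
  also have "\<dots> \<le> (1 - x ^ l) * (1 + real l * x ^ l / (real n * (1 - x)))"
    using shift by (simp add: distrib_left)
  finally show ?thesis .
qed

lemma prod_perturbed_le_prod_one_minus_power:
  fixes x :: real
  assumes "0 \<le> x" "x < 1"
  shows "(\<Prod>l=1..n. 1 - x ^ l * (1 - real l / real n))
           \<le> (\<Prod>l=1..n. 1 - x ^ l) * exp (1 / ((1 - x) ^ 3 * real n))"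
proof -
  define t where "t l = real l * x ^ l / (real n * (1 - x))" for l
  have "(\<Prod>l=1..n. 1 - x ^ l * (1 - real l / real n)) \<le> (\<Prod>l=1..n. (1 - x ^ l) * (1 + t l))"
  proof (rule prod_mono)
    fix l assume "l \<in> {1..n}"
    then show "0 \<le> 1 - x ^ l * (1 - real l / real n)
        \<and> 1 - x ^ l * (1 - real l / real n) \<le> (1 - x ^ l) * (1 + t l)"
      using one_minus_power_perturbed_le[OF assms, of l n] one_minus_power_mult_pos[OF assms, of l]
      by (auto simp: t_def less_imp_le)
  qed
  also have "\<dots> = (\<Prod>l=1..n. 1 - x ^ l) * (\<Prod>l=1..n. 1 + t l)"
    by (rule prod.distrib)
  also have "\<dots> \<le> (\<Prod>l=1..n. 1 - x ^ l) * exp (1 / ((1 - x) ^ 3 * real n))"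
  proof (rule mult_left_mono)
    have "(\<Prod>l=1..n. 1 + t l) \<le> exp (\<Sum>l=1..n. t l)"
      using assms by (intro prod_le_exp_sum) (simp add: t_def)
    also have "(\<Sum>l=1..n. t l) = (\<Sum>l=1..n. real l * x ^ l) / (real n * (1 - x))"
      by (simp add: t_def sum_divide_distrib)
    also have "\<dots> \<le> 1 / ((1 - x) ^ 3 * real n)"
      using divide_right_mono[OF sum_mult_power_le[OF assms, of n], of "real n * (1 - x)"] assms
      by (simp add: power2_eq_square power3_eq_cube mult_ac)
    finally show "(\<Prod>l=1..n. 1 + t l) \<le> exp (1 / ((1 - x) ^ 3 * real n))"
      by simp
    show "0 \<le> (\<Prod>l=1..n. 1 - x ^ l)"
      using assms by (intro prod_nonneg) (simp add: power_le_one)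
  qed
  finally show ?thesis .
qed

lemma LIMSEQ_prod_perturbed:
  fixes x :: real
  assumes "0 \<le> x" "x < 1"
  shows "(\<lambda>n. \<Prod>l=1..n. 1 - x ^ l * (1 - real l / real n)) \<longlonglongrightarrow> qpoch_inf x"
proof (rule tendsto_sandwich)
  have x: "\<bar>x\<bar> < 1" using assms by simp
  show "(\<lambda>n. \<Prod>l=1..n. 1 - x ^ l) \<longlonglongrightarrow> qpoch_inf x"
    by (rule LIMSEQ_qpoch_inf[OF x])
  have "(\<lambda>n. 1 / ((1 - x) ^ 3 * real n)) \<longlonglongrightarrow> 0"
    using tendsto_mult_right_zero[OF lim_1_over_n, of "1 / (1 - x) ^ 3"] by simp
  then have "(\<lambda>n. (\<Prod>l=1..n. 1 - x ^ l) * exp (1 / ((1 - x) ^ 3 * real n)))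
      \<longlonglongrightarrow> qpoch_inf x * exp 0"
    by (intro tendsto_intros LIMSEQ_qpoch_inf[OF x])
  then show "(\<lambda>n. (\<Prod>l=1..n. 1 - x ^ l) * exp (1 / ((1 - x) ^ 3 * real n))) \<longlonglongrightarrow> qpoch_inf x"
    by simp
  show "\<forall>\<^sub>F n in sequentially. (\<Prod>l=1..n. 1 - x ^ l) \<le> (\<Prod>l=1..n. 1 - x ^ l * (1 - real l / real n))"
    using prod_one_minus_power_le_perturbed[OF assms] by (intro always_eventually) blast
  show "\<forall>\<^sub>F n in sequentially. (\<Prod>l=1..n. 1 - x ^ l * (1 - real l / real n))
      \<le> (\<Prod>l=1..n. 1 - x ^ l) * exp (1 / ((1 - x) ^ 3 * real n))"
    using prod_perturbed_le_prod_one_minus_power[OF assms] by (intro always_eventually) blast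
qed

lemma careless_nu_top_asymp_equiv:
  assumes "0 < p" "p < 1"
  shows "(\<lambda>n. careless_nu n p n) \<sim>[at_top]
           (\<lambda>n. 1 / qpoch_inf (1 - p) * (fact n / real n ^ n) * (1 - p) ^ (n * (n + 1) div 2))"
    (is "_ \<sim>[at_top] ?g")
proof -
  define Q where "Q = qpoch_inf (1 - p)"
  define D where "D n = (\<Prod>l=1..n. 1 - (1 - p) ^ l * (1 - real l / real n))" for n
  have "Q \<noteq> 0"
    unfolding Q_def using assms by (intro qpoch_inf_nonzero) simp
  have ratio: "(\<lambda>n. Q / D n) \<sim>[at_top] (\<lambda>_. 1)"
  proof (rule tendsto_imp_asymp_equiv_const)
    show "(\<lambda>n. Q / D n) \<longlonglongrightarrow> 1"
      using tendsto_divide[OF tendsto_const LIMSEQ_prod_perturbed, of "1 - p" Q] assms \<open>Q \<noteq> 0\<close>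
      by (simp add: D_def Q_def)
  qed simp
  have "\<forall>\<^sub>F n in at_top. careless_nu n p n = ?g n * (Q / D n)"
    using eventually_gt_at_top[of 0]
  proof eventually_elim
    case (elim n)
    then show ?case
      using careless_nu_top[OF assms elim] careless_stationary_moment_top[of n p] \<open>Q \<noteq> 0\<close>
      by (simp add: D_def Q_def)
  qed
  then have "(\<lambda>n. careless_nu n p n) \<sim>[at_top] (\<lambda>n. ?g n * (Q / D n))"
    by (rule asymp_equiv_refl_ev)
  also have "\<dots> \<sim>[at_top] (\<lambda>n. ?g n * 1)"
    using asymp_equiv_refl ratio by (rule asymp_equiv_mult)
  finally show ?thesis by simp
qed

theorem mainTheorem6:
  fixes p q :: real
  assumes "0 < p" "p < 1" "q = 1 - p"
  shows "((\<lambda>n. careless_nu n p n) \<sim>[at_top]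
           (\<lambda>n. 1 / qpoch_inf q * (fact n / real n ^ n) * q ^ (n * (n + 1) div 2))) \<and>
         (\<forall>n\<ge>1. careless_mu n p = careless_nu n p n * (1 - q ^ n)) \<and>
         ((\<lambda>n. careless_mu n p) \<sim>[at_top]
           (\<lambda>n. 1 / qpoch_inf q * (fact n / real n ^ n) * q ^ (n * (n + 1) div 2)))"
proof -
  let ?g = "\<lambda>n. 1 / qpoch_inf q * (fact n / real n ^ n) * q ^ (n * (n + 1) div 2)"
  have nu: "(\<lambda>n. careless_nu n p n) \<sim>[at_top] ?g"
    using careless_nu_top_asymp_equiv[OF assms(1,2)] assms(3) by simp
  have mu: "\<forall>n\<ge>1. careless_mu n p = careless_nu n p n * (1 - q ^ n)"
    using careless_mu_eq[OF assms(1,2)] assms(3) by simp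
  have "(\<lambda>n. 1 - q ^ n) \<longlonglongrightarrow> 1 - 0"
    using assms by (intro tendsto_diff tendsto_const LIMSEQ_power_zero) auto
  then have one_minus_power: "(\<lambda>n. 1 - q ^ n) \<sim>[at_top] (\<lambda>_. 1)"
    by (intro tendsto_imp_asymp_equiv_const) auto
  have "\<forall>\<^sub>F n in at_top. careless_mu n p = careless_nu n p n * (1 - q ^ n)"
    using eventually_ge_at_top[of 1] by eventually_elim (use mu in auto)
  then have "(\<lambda>n. careless_mu n p) \<sim>[at_top] (\<lambda>n. careless_nu n p n * (1 - q ^ n))"
    by (rule asymp_equiv_refl_ev)
  also have "\<dots> \<sim>[at_top] (\<lambda>n. ?g n * 1)"
    using nu one_minus_power by (rule asymp_equiv_mult)
  finally show ?thesis
    using nu mu by simp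
qed

end
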